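(* Let $t>0$ and $w(x,t)=\mathrm{e}^{-x^{2}-t/x^{2}}$ for $x\in(-\infty,\infty)$, and let $\mathrm{v}(z)=-\ln w(z,t)=z^2+t/z^2$, so $\mathrm{v}'(z)=2z-2t/z^3$. Let $P_n(x)$ be the monic polynomials of degree $n$ orthogonal with respect to $w(x,t)$ on $\mathbb{R}$, with $\int_{-\infty}^{\infty}P_m(x)P_n(x)w(x,t)\,dx=h_n\delta_{mn}$, and define $$A_{n}(z):=\frac{1}{h_{n}}\int_{-\infty}^{\infty}\frac{\mathrm{v}'(z)-\mathrm{v}'(y)}{z-y}P_{n}^{2}(y)w(y,t)dy,\qquad B_{n}(z):=\frac{1}{h_{n-1}}\int_{-\infty}^{\infty}\frac{\mathrm{v}'(z)-\mathrm{v}'(y)}{z-y}P_{n}(y)P_{n-1}(y)w(y,t)dy.$$ Then $$A_{n}(z)=2+\frac{R_{n}(t)}{z^2},\qquad B_{n}(z)=\frac{r_{n}(t)}{z}+\frac{(1-(-1)^n)t}{z^3},$$ where $$R_{n}(t):=\frac{2t}{h_{n}}\int_{-\infty}^{\infty}\frac{1}{y^2} P_{n}^{2}(y)w(y,t)dy,\qquad r_{n}(t):=\frac{2t}{h_{n-1}}\int_{-\infty}^{\infty}\frac{1}{y^3} P_{n}(y)P_{n-1}(y)w(y,t)dy.$$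
   Context: Convention: $P_{-1}=0$, so that $B_0=0$ and $r_0=0$. The weight is even, so $P_n$ contains only powers of $x$ of the same parity as $n$, and the monic orthogonal polynomials satisfy $xP_n(x)=P_{n+1}(x)+\beta_nP_{n-1}(x)$ with $\beta_n=h_n/h_{n-1}$. *)

theory Defs
  imports "HOL-Analysis.Analysis" "HOL-Computational_Algebra.Polynomial"
begin

text \<open>Weight w(x,t) = exp(-x^2 - t/x^2) on the real line (value at the single point 0
  set to its limit 0; irrelevant for the integrals).\<close>
definition wt :: "real \<Rightarrow> real \<Rightarrow> real" where
  "wt t x = (if x = 0 then 0 else exp (- x\<^sup>2 - t / x\<^sup>2))"

definition vp :: "real \<Rightarrow> complex \<Rightarrow> complex" where
  "vp t z = 2 * z - 2 * complex_of_real t / z ^ 3"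

definition monic_orth :: "real \<Rightarrow> (nat \<Rightarrow> real poly) \<Rightarrow> bool" where
  "monic_orth t P \<longleftrightarrow>
     (\<forall>n. degree (P n) = n \<and> lead_coeff (P n) = 1) \<and>
     (\<forall>m n. m \<noteq> n \<longrightarrow> (LINT x|lborel. poly (P m) x * poly (P n) x * wt t x) = 0)"

definition hn :: "real \<Rightarrow> (nat \<Rightarrow> real poly) \<Rightarrow> nat \<Rightarrow> real" where
  "hn t P n = (LINT x|lborel. (poly (P n) x)\<^sup>2 * wt t x)"

text \<open>Convention P_{-1} = 0: the polynomial P_{n-1} and its norm h_{n-1}
  (for n = 0 the polynomial is 0, and h_{-1} is set to 1; it only multiplies 0).\<close>
definition Pprev :: "(nat \<Rightarrow> real poly) \<Rightarrow> nat \<Rightarrow> real poly" where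
  "Pprev P n = (if n = 0 then 0 else P (n - 1))"

definition hprev :: "real \<Rightarrow> (nat \<Rightarrow> real poly) \<Rightarrow> nat \<Rightarrow> real" where
  "hprev t P n = (if n = 0 then 1 else hn t P (n - 1))"

definition An :: "real \<Rightarrow> (nat \<Rightarrow> real poly) \<Rightarrow> nat \<Rightarrow> complex \<Rightarrow> complex" where
  "An t P n z = (1 / complex_of_real (hn t P n)) *
     (LINT y|lborel. ((vp t z - vp t (complex_of_real y)) / (z - complex_of_real y))
        * complex_of_real ((poly (P n) y)\<^sup>2 * wt t y))"

definition Bn :: "real \<Rightarrow> (nat \<Rightarrow> real poly) \<Rightarrow> nat \<Rightarrow> complex \<Rightarrow> complex" where
  "Bn t P n z = (1 / complex_of_real (hprev t P n)) *
     (LINT y|lborel. ((vp t z - vp t (complex_of_real y)) / (z - complex_of_real y))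
        * complex_of_real (poly (P n) y * poly (Pprev P n) y * wt t y))"

definition Rn :: "real \<Rightarrow> (nat \<Rightarrow> real poly) \<Rightarrow> nat \<Rightarrow> real" where
  "Rn t P n = (2 * t / hn t P n) * (LINT y|lborel. (1 / y\<^sup>2) * (poly (P n) y)\<^sup>2 * wt t y)"

definition rn :: "real \<Rightarrow> (nat \<Rightarrow> real poly) \<Rightarrow> nat \<Rightarrow> real" where
  "rn t P n = (2 * t / hprev t P n) *
     (LINT y|lborel. (1 / y ^ 3) * poly (P n) y * poly (Pprev P n) y * wt t y)"

end

theory Submission
  imports Defs "HOL-Probability.Distributions"
begin

text \<open>The kernel (v'(z) - v'(y)) / (z - y) equals 2 + 2t/(z y^3) + 2t/(z^2 y^2) + 2t/(z^3 y),
  so A_n and B_n are linear combinations of the integrals of p(y) w(y) / y^k, k \<le> 3, for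
  p = P_n^2 and p = P_n P_{n-1}; these exist because exp(-t/y^2) vanishes to infinite order
  at 0. As w is even, P_n has the parity of n, and the moments of odd integrands vanish. For
  A_n this leaves h_n and R_n. For B_n it leaves r_n and the moment of P_n P_{n-1} w / y: for
  odd n, P_n = y S with S monic of degree n - 1, which gives h_{n-1}; for even n,
  P_{n-1} = y S with deg S < n, which gives 0 by orthogonality.\<close>

lemma exp_neg_div_power2_le:
  fixes t x :: real
  assumes "t > 0" "x \<noteq> 0"
  shows "exp (- t / x\<^sup>2) \<le> 4 * x ^ 4 / t\<^sup>2"
proof -
  define s where "s = t / x\<^sup>2"
  have s: "s > 0"
    using assms by (simp add: s_def)
  have "s\<^sup>2 / 4 \<le> (1 + s / 2)\<^sup>2"
    using s by (simp add: power2_eq_square field_simps)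
  also have "\<dots> \<le> exp s"
    using exp_ge_one_plus_x_over_n_power_n[of 2 s] s by simp
  finally have "1 / exp s \<le> 1 / (s\<^sup>2 / 4)"
    using s by (intro divide_left_mono) auto
  then show ?thesis
    using assms by (simp add: s_def exp_minus field_simps power2_eq_square eval_nat_numeral)
qed

lemma wt_0 [simp]: "wt t 0 = 0"
  by (simp add: wt_def)

lemma wt_minus [simp]: "wt t (- x) = wt t x"
  by (simp add: wt_def)

lemma wt_pos: "x \<noteq> 0 \<Longrightarrow> wt t x > 0"
  by (simp add: wt_def)

lemma wt_nonneg: "wt t x \<ge> 0"
  by (simp add: wt_def)

lemma borel_measurable_wt [measurable]: "wt t \<in> borel_measurable borel"
  unfolding wt_def by measurable

lemma borel_measurable_poly [measurable]: "poly (p :: real poly) \<in> borel_measurable borel"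
  by (intro borel_measurable_continuous_onI continuous_on_poly continuous_on_id)

lemma integrable_power_wt_div_power:
  fixes t :: real
  assumes "t > 0" "k \<le> 4"
  shows "integrable lborel (\<lambda>x. x ^ i * wt t x / x ^ k)"
proof (rule Bochner_Integration.integrable_bound)
  let ?g = "\<lambda>x. 4 / t\<^sup>2 * sqrt (2 * pi) * (std_normal_density x * \<bar>x\<bar> ^ (i + 4 - k))"
  show "integrable lborel ?g"
    by (intro integrable_mult_right integrable_std_normal_moment_abs)
  show "AE x in lborel. norm (x ^ i * wt t x / x ^ k) \<le> norm (?g x)"
  proof (intro AE_I2)
    fix x :: real
    show "norm (x ^ i * wt t x / x ^ k) \<le> norm (?g x)"
    proof (cases "x = 0")
      case False
      have "norm (x ^ i * wt t x / x ^ k)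
          = \<bar>x\<bar> ^ i * exp (- x\<^sup>2) * exp (- t / x\<^sup>2) / \<bar>x\<bar> ^ k"
        using False by (simp add: wt_def abs_mult power_abs flip: exp_add)
      also have "\<dots> \<le> \<bar>x\<bar> ^ i * exp (- x\<^sup>2) * (4 * \<bar>x\<bar> ^ 4 / t\<^sup>2) / \<bar>x\<bar> ^ k"
        using exp_neg_div_power2_le[OF assms(1) False] power_even_abs[of 4 x]
        by (intro divide_right_mono mult_left_mono) auto
      also have "\<dots> = 4 / t\<^sup>2 * exp (- x\<^sup>2) * \<bar>x\<bar> ^ (i + 4 - k)"
        using False assms(2) by (simp add: power_diff power_add)
      also have "\<dots> \<le> 4 / t\<^sup>2 * exp (- x\<^sup>2 / 2) * \<bar>x\<bar> ^ (i + 4 - k)"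
        by (intro mult_right_mono mult_left_mono) auto
      also have "\<dots> = norm (?g x)"
        by (simp add: std_normal_density_def abs_mult)
      finally show ?thesis .
    qed simp
  qed
qed measurable

lemma integrable_poly_wt_div_power:
  assumes "t > 0" "k \<le> 4"
  shows "integrable lborel (\<lambda>x. poly p x * wt t x / x ^ k)"
proof -
  have eq: "(\<lambda>x. poly p x * wt t x / x ^ k)
      = (\<lambda>x. \<Sum>i\<le>degree p. coeff p i * (x ^ i * wt t x / x ^ k))"
    by (simp add: poly_altdef sum_distrib_right sum_divide_distrib mult.assoc)
  show ?thesis
    unfolding eq
    by (intro Bochner_Integration.integrable_sum integrable_mult_right
        integrable_power_wt_div_power[OF assms])
qed

lemma lborel_integral_reflect:
  fixes f :: "real \<Rightarrow> 'a::{banach, second_countable_topology}"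
  shows "(LINT x|lborel. f (- x)) = (LINT x|lborel. f x)"
  using lborel_integral_real_affine[of "-1" f 0] by simp

lemma lborel_integral_odd_eq_0:
  fixes f :: "real \<Rightarrow> real"
  assumes "\<And>x. f (- x) = - f x"
  shows "(LINT x|lborel. f x) = 0"
proof -
  have "(LINT x|lborel. f x) = - (LINT x|lborel. f x)"
    using lborel_integral_reflect[of f] by (simp add: assms)
  then show ?thesis by simp
qed

definition wt_inner :: "real \<Rightarrow> real poly \<Rightarrow> real poly \<Rightarrow> real" where
  "wt_inner t p q = (LINT x|lborel. poly p x * poly q x * wt t x)"

lemma integrable_wt_inner:
  "t > 0 \<Longrightarrow> integrable lborel (\<lambda>x. poly p x * poly q x * wt t x)"
  using integrable_poly_wt_div_power[of t 0 "p * q"] by simp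

lemma wt_inner_commute: "wt_inner t p q = wt_inner t q p"
  unfolding wt_inner_def by (simp add: mult.commute)

lemma wt_inner_zero_right [simp]: "wt_inner t p 0 = 0"
  by (simp add: wt_inner_def)

lemma wt_inner_add_right:
  "t > 0 \<Longrightarrow> wt_inner t p (q + r) = wt_inner t p q + wt_inner t p r"
  unfolding wt_inner_def using integrable_wt_inner[of t p q] integrable_wt_inner[of t p r]
  by (simp add: distrib_left distrib_right flip: integral_add)

lemma wt_inner_smult_right: "wt_inner t p (smult c q) = c * wt_inner t p q"
  unfolding wt_inner_def by (simp add: mult_ac)

lemma wt_inner_reflect:
  "wt_inner t (pcompose p [:0, -1:]) q = wt_inner t p (pcompose q [:0, -1:])"
  unfolding wt_inner_def poly_pcompose
  using lborel_integral_reflect[of "\<lambda>x. poly p x * poly q (- x) * wt t x"] by simp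

lemma wt_inner_self_eq_0_iff:
  assumes "t > 0"
  shows "wt_inner t p p = 0 \<longleftrightarrow> p = 0"
proof
  assume "wt_inner t p p = 0"
  moreover have "AE x in lborel. 0 \<le> poly p x * poly p x * wt t x"
    by (intro AE_I2 mult_nonneg_nonneg zero_le_square wt_nonneg)
  ultimately have "AE x in lborel. poly p x * poly p x * wt t x = 0"
    using integral_nonneg_eq_0_iff_AE[OF integrable_wt_inner[OF assms]]
    by (simp add: wt_inner_def)
  then have zero: "AE x in lborel. x = 0 \<or> poly p x = 0"
    by eventually_elim (metis mult_eq_0_iff wt_pos less_irrefl)
  show "p = 0"
  proof (rule ccontr)
    assume "p \<noteq> 0"
    then have "AE x in lborel. x \<notin> insert 0 {x. poly p x = 0}"
      by (intro AE_not_in finite_imp_null_set_lborel) (auto simp: poly_roots_finite)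
    with zero have "AE (x::real) in lborel. False"
      by eventually_elim blast
    then show False
      by (simp add: eventually_False ae_filter_eq_bot_iff)
  qed
qed (simp add: wt_inner_def)

lemma hn_eq_wt_inner: "hn t P n = wt_inner t (P n) (P n)"
  by (simp add: hn_def wt_inner_def power2_eq_square)

lemma monic_orthD:
  assumes "monic_orth t P"
  shows "degree (P n) = n" and "coeff (P n) n = 1"
    and "m \<noteq> n \<Longrightarrow> wt_inner t (P m) (P n) = 0"
  using assms unfolding monic_orth_def wt_inner_def by metis+

lemma hn_neq_0:
  assumes "t > 0" "monic_orth t P"
  shows "hn t P n \<noteq> 0"
  using monic_orthD(2)[OF assms(2), of n]
  by (auto simp: hn_eq_wt_inner wt_inner_self_eq_0_iff[OF assms(1)])

lemma degree_less_if_coeff_eq_0: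
  fixes q :: "'a::zero poly"
  assumes "degree q \<le> n" "coeff q n = 0"
  shows "q = 0 \<or> degree q < n"
  using assms by (metis le_neq_implies_less leading_coeff_0_iff)

lemma wt_inner_eq_0_if_orth_lower:
  assumes t: "t > 0" and P: "monic_orth t P"
    and orth: "\<And>m. m < n \<Longrightarrow> wt_inner t p (P m) = 0"
    and q: "q = 0 \<or> degree q < n"
  shows "wt_inner t p q = 0"
  using q orth
proof (induction n arbitrary: q)
  case (Suc n)
  define c where "c = coeff q n"
  define q' where "q' = q - smult c (P n)"
  have "degree q' \<le> n"
    using Suc.prems(1) monic_orthD(1)[OF P, of n] unfolding q'_def
    by (intro degree_diff_le) (auto intro: order.trans[OF degree_smult_le])
  moreover have "coeff q' n = 0"
    using monic_orthD(2)[OF P, of n] by (simp add: q'_def c_def)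
  ultimately have "q' = 0 \<or> degree q' < n"
    by (rule degree_less_if_coeff_eq_0)
  then have "wt_inner t p q' = 0"
    using Suc.IH Suc.prems(2) by simp
  moreover have "wt_inner t p (P n) = 0"
    using Suc.prems(2) by simp
  moreover have "q = q' + smult c (P n)"
    by (simp add: q'_def)
  ultimately show ?case
    by (simp add: wt_inner_add_right[OF t] wt_inner_smult_right)
qed simp

lemma monic_orth_inner_degree_less:
  assumes t: "t > 0" and P: "monic_orth t P" and q: "q = 0 \<or> degree q < n"
  shows "wt_inner t (P n) q = 0"
proof (rule wt_inner_eq_0_if_orth_lower[OF t P _ q])
  show "wt_inner t (P n) (P m) = 0" if "m < n" for m
    using monic_orthD(3)[OF P, of n m] that by simp
qed

lemma monic_orth_inner_monic:
  assumes t: "t > 0" and P: "monic_orth t P" and q: "degree q = n" "coeff q n = 1"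
  shows "wt_inner t (P n) q = hn t P n"
proof -
  have "degree (q - P n) \<le> n"
    using q monic_orthD(1)[OF P, of n] by (intro degree_diff_le) auto
  moreover have "coeff (q - P n) n = 0"
    using q monic_orthD(2)[OF P, of n] by simp
  ultimately have "q - P n = 0 \<or> degree (q - P n) < n"
    by (rule degree_less_if_coeff_eq_0)
  then have "wt_inner t (P n) (q - P n) = 0"
    by (rule monic_orth_inner_degree_less[OF t P])
  moreover have "wt_inner t (P n) q = wt_inner t (P n) (P n) + wt_inner t (P n) (q - P n)"
    using wt_inner_add_right[OF t, of "P n" "P n" "q - P n"] by simp
  ultimately show ?thesis
    by (simp add: hn_eq_wt_inner)
qed

text \<open>P_n(-x) is, up to the sign (-1)^n, again monic of degree n and, inductively, orthogonal
  to all lower P_m; so Q below has degree < n and is orthogonal to itself.\<close>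
lemma monic_orth_poly_minus:
  assumes t: "t > 0" and P: "monic_orth t P"
  shows "poly (P n) (- x) = (-1) ^ n * poly (P n) x"
proof (induction n arbitrary: x rule: less_induct)
  case (less n)
  define R where "R = pcompose (P n) [:0, -1:]"
  define Q where "Q = P n - smult ((-1) ^ n) R"
  have deg: "degree (P n) = n" "coeff (P n) n = 1"
    using monic_orthD[OF P] by auto
  have "degree R = n"
    using deg by (simp add: R_def degree_pcompose)
  have "coeff R n = (-1) ^ n"
    using lead_coeff_comp[of "[:0, -1:]" "P n"] deg \<open>degree R = n\<close> by (simp add: R_def)
  have "degree Q \<le> n"
    using deg \<open>degree R = n\<close> unfolding Q_def
    by (intro degree_diff_le) (auto intro: order.trans[OF degree_smult_le])
  moreover have "coeff Q n = 0"
    using deg \<open>coeff R n = (-1) ^ n\<close> by (simp add: Q_def flip: power_mult_distrib)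
  ultimately have Q: "Q = 0 \<or> degree Q < n"
    by (rule degree_less_if_coeff_eq_0)
  have "wt_inner t Q (P m) = 0" if "m < n" for m
  proof -
    have "pcompose (P m) [:0, -1:] = smult ((-1) ^ m) (P m)"
      by (rule poly_eq_poly_eq_iff[THEN iffD1])
        (simp add: fun_eq_iff poly_pcompose less[OF that])
    then have "wt_inner t R (P m) = (-1) ^ m * wt_inner t (P n) (P m)"
      by (simp add: R_def wt_inner_reflect wt_inner_smult_right)
    also have "\<dots> = 0"
      using monic_orthD(3)[OF P, of n m] that by simp
    finally have "wt_inner t (P m) R = 0"
      by (simp add: wt_inner_commute)
    moreover have "wt_inner t (P m) (P n) = 0"
      using monic_orthD(3)[OF P, of m n] that by simp
    moreover have "P n = Q + smult ((-1) ^ n) R"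
      by (simp add: Q_def)
    ultimately show ?thesis
      using wt_inner_add_right[OF t, of "P m" Q "smult ((-1) ^ n) R"]
      by (simp add: wt_inner_smult_right wt_inner_commute)
  qed
  then have "wt_inner t Q Q = 0"
    using Q by (rule wt_inner_eq_0_if_orth_lower[OF t P])
  then have "Q = 0"
    by (simp add: wt_inner_self_eq_0_iff[OF t])
  then have "P n = smult ((-1) ^ n) R"
    by (simp add: Q_def)
  then have "poly (P n) (- x) = (-1) ^ n * poly R (- x)"
    by simp
  also have "poly R (- x) = poly (P n) x"
    by (simp add: R_def poly_pcompose)
  finally show ?case .
qed

definition wt_inv_moment :: "real \<Rightarrow> real poly \<Rightarrow> nat \<Rightarrow> real" where
  "wt_inv_moment t p k = (LINT y|lborel. poly p y * wt t y / y ^ k)"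

lemma wt_inv_moment_0: "wt_inv_moment t (p * q) 0 = wt_inner t p q"
  by (simp add: wt_inv_moment_def wt_inner_def)

lemma wt_inv_moment_monom_mult:
  "wt_inv_moment t ([:0, 1:] * p) (Suc k) = wt_inv_moment t p k"
  unfolding wt_inv_moment_def
  by (intro Bochner_Integration.integral_cong) (auto simp: wt_def)

lemma wt_inv_moment_eq_0_if_parity:
  assumes "\<And>y. poly p (- y) = (-1) ^ j * poly p y" and "odd (j + k)"
  shows "wt_inv_moment t p k = 0"
  unfolding wt_inv_moment_def
proof (rule lborel_integral_odd_eq_0)
  fix y :: real
  have "(-1) ^ j / (-1) ^ k = (-1 :: real)"
    using assms(2) by (cases "even j") auto
  then show "poly p (- y) * wt t (- y) / (- y) ^ k = - (poly p y * wt t y / y ^ k)"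
    by (cases "y = 0") (auto simp: assms(1) power_minus[of y k] field_simps)
qed

lemma vp_diff_quotient:
  fixes z y :: complex
  assumes "z \<noteq> 0" "y \<noteq> 0" "y \<noteq> z"
  shows "(vp t z - vp t y) / (z - y)
    = 2 + 2 * t / z * (1 / y ^ 3) + 2 * t / z\<^sup>2 * (1 / y\<^sup>2) + 2 * t / z ^ 3 * (1 / y)"
proof -
  have "vp t z - vp t y = (z - y)
      * (2 + 2 * t / z * (1 / y ^ 3) + 2 * t / z\<^sup>2 * (1 / y\<^sup>2) + 2 * t / z ^ 3 * (1 / y))"
    using assms unfolding vp_def by (simp add: field_simps) algebra
  then show ?thesis
    using assms(3) by simp
qed

lemma integral_vp_diff_quotient:
  fixes z :: complex
  assumes t: "t > 0" and z: "z \<noteq> 0"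
  shows "(LINT y|lborel. ((vp t z - vp t y) / (z - y)) * complex_of_real (poly p y * wt t y))
    = 2 * of_real (wt_inv_moment t p 0) + 2 * of_real t / z * of_real (wt_inv_moment t p 3)
      + 2 * of_real t / z\<^sup>2 * of_real (wt_inv_moment t p 2)
      + 2 * of_real t / z ^ 3 * of_real (wt_inv_moment t p 1)"
    (is "_ = ?R")
proof -
  let ?F = "\<lambda>k y. complex_of_real (poly p y * wt t y / y ^ k)"
  let ?G = "\<lambda>y. 2 * ?F 0 y + 2 * of_real t / z * ?F 3 y
    + 2 * of_real t / z\<^sup>2 * ?F 2 y + 2 * of_real t / z ^ 3 * ?F 1 y"
  have int: "integrable lborel (?F k)" if "k \<le> 4" for k
    using integrable_poly_wt_div_power[OF t that] by (rule integrable_of_real)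
  have "AE y in lborel. ((vp t z - vp t y) / (z - y)) * complex_of_real (poly p y * wt t y) = ?G y"
    using AE_lborel_singleton[of "Re z"]
  proof eventually_elim
    case (elim y)
    show ?case
    proof (cases "y = 0")
      case False
      with elim z have "(vp t z - vp t (of_real y)) / (z - of_real y)
          = 2 + 2 * of_real t / z * (1 / of_real y ^ 3)
            + 2 * of_real t / z\<^sup>2 * (1 / (of_real y)\<^sup>2) + 2 * of_real t / z ^ 3 * (1 / of_real y)"
        by (intro vp_diff_quotient) auto
      then show ?thesis
        by (simp add: field_simps)
    qed simp
  qed
  then have "(LINT y|lborel. ((vp t z - vp t y) / (z - y)) * complex_of_real (poly p y * wt t y))
      = (LINT y|lborel. ?G y)"
    by (intro integral_cong_AE) (simp_all add: vp_def)
  also have "\<dots> = ?R"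
    using int[of 0] int[of 1] int[of 2] int[of 3]
    by (simp add: wt_inv_moment_def integral_add del: of_real_divide of_real_mult)
  finally show ?thesis .
qed

lemma monic_orth_odd_eq_monom_mult:
  assumes t: "t > 0" and P: "monic_orth t P" and n: "odd n"
  obtains S where "P n = [:0, 1:] * S" "degree S = n - 1" "coeff S (n - 1) = 1"
proof -
  have "poly (P n) 0 = 0"
    using monic_orth_poly_minus[OF t P, of n 0] n by simp
  then obtain S where S: "P n = [:0, 1:] * S"
    by (auto simp: poly_eq_0_iff_dvd elim: dvdE)
  moreover have "S \<noteq> 0"
    using S monic_orthD(2)[OF P, of n] by auto
  ultimately have "degree S = n - 1" "coeff S (n - 1) = 1"
    using monic_orthD[OF P, of n] by (auto simp: degree_mult_eq lead_coeff_mult)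
  with S that show ?thesis
    by blast
qed

lemma monic_orth_inv_moment_1:
  assumes t: "t > 0" and P: "monic_orth t P"
  shows "wt_inv_moment t (P (Suc m) * P m) 1 = (if even m then hn t P m else 0)"
proof (cases "even m")
  case True
  then obtain S where S: "P (Suc m) = [:0, 1:] * S" "degree S = m" "coeff S m = 1"
    using monic_orth_odd_eq_monom_mult[OF t P, of "Suc m"] by auto
  have "wt_inv_moment t (P (Suc m) * P m) 1 = wt_inner t (P m) S"
    using wt_inv_moment_monom_mult[of t "S * P m" 0]
    by (simp add: S(1) mult.assoc wt_inv_moment_0 wt_inner_commute)
  also have "\<dots> = hn t P m"
    using S(2,3) by (rule monic_orth_inner_monic[OF t P])
  finally show ?thesis
    using True by simp
next
  case False
  then obtain S where S: "P m = [:0, 1:] * S" "degree S = m - 1"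
    using monic_orth_odd_eq_monom_mult[OF t P, of m] by auto
  have "wt_inv_moment t (P (Suc m) * P m) 1 = wt_inner t (P (Suc m)) S"
    using wt_inv_moment_monom_mult[of t "P (Suc m) * S" 0]
    by (simp add: S(1) mult.left_commute wt_inv_moment_0)
  also have "\<dots> = 0"
    using S(2) by (intro monic_orth_inner_degree_less[OF t P]) auto
  finally show ?thesis
    using False by simp
qed

lemma An_closed_form:
  assumes t: "t > 0" and P: "monic_orth t P" and z: "z \<noteq> 0"
  shows "An t P n z = 2 + complex_of_real (Rn t P n) / z\<^sup>2"
proof -
  let ?p = "P n ^ 2"
  have even: "poly ?p (- y) = (-1) ^ 0 * poly ?p y" for y
    by (simp add: monic_orth_poly_minus[OF t P] power_mult_distrib flip: power_mult)
  have M1: "wt_inv_moment t ?p 1 = 0" and M3: "wt_inv_moment t ?p 3 = 0"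
    by (rule wt_inv_moment_eq_0_if_parity[OF even], simp)+
  have M0: "wt_inv_moment t ?p 0 = hn t P n"
    by (simp add: wt_inv_moment_def hn_def)
  have M2: "Rn t P n = 2 * t / hn t P n * wt_inv_moment t ?p 2"
    by (simp add: Rn_def wt_inv_moment_def field_simps)
  have "An t P n z = 1 / hn t P n * (2 * of_real (wt_inv_moment t ?p 0)
      + 2 * of_real t / z * of_real (wt_inv_moment t ?p 3)
      + 2 * of_real t / z\<^sup>2 * of_real (wt_inv_moment t ?p 2)
      + 2 * of_real t / z ^ 3 * of_real (wt_inv_moment t ?p 1))"
    using integral_vp_diff_quotient[OF t z, of ?p] by (simp add: An_def poly_power)
  also have "\<dots> = 2 + complex_of_real (Rn t P n) / z\<^sup>2"
    unfolding M0 M1 M2 M3 using hn_neq_0[OF t P, of n] z by (simp add: field_simps)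
  finally show ?thesis .
qed

lemma Bn_closed_form:
  assumes t: "t > 0" and P: "monic_orth t P" and z: "z \<noteq> 0"
  shows "Bn t P n z = complex_of_real (rn t P n) / z
    + complex_of_real ((1 - (-1) ^ n) * t) / z ^ 3"
proof (cases n)
  case 0
  then show ?thesis
    by (simp add: Bn_def rn_def Pprev_def)
next
  case (Suc m)
  let ?p = "P n * P m"
  have odd: "poly ?p (- y) = (-1) ^ (n + m) * poly ?p y" for y
    by (simp add: monic_orth_poly_minus[OF t P] power_add)
  have M0: "wt_inv_moment t ?p 0 = 0"
    using monic_orthD(3)[OF P, of n m] Suc by (simp add: wt_inv_moment_0)
  have M2: "wt_inv_moment t ?p 2 = 0"
    by (rule wt_inv_moment_eq_0_if_parity[OF odd]) (simp add: Suc)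
  have M1: "wt_inv_moment t ?p 1 = (if odd n then hn t P m else 0)"
    using monic_orth_inv_moment_1[OF t P, of m] Suc by simp
  have M3: "rn t P n = 2 * t / hn t P m * wt_inv_moment t ?p 3"
    using Suc by (simp add: rn_def wt_inv_moment_def Pprev_def hprev_def field_simps)
  have "Bn t P n z = 1 / hn t P m * (2 * of_real (wt_inv_moment t ?p 0)
      + 2 * of_real t / z * of_real (wt_inv_moment t ?p 3)
      + 2 * of_real t / z\<^sup>2 * of_real (wt_inv_moment t ?p 2)
      + 2 * of_real t / z ^ 3 * of_real (wt_inv_moment t ?p 1))"
    using integral_vp_diff_quotient[OF t z, of ?p] Suc
    by (simp add: Bn_def Pprev_def hprev_def)
  also have "\<dots> = complex_of_real (rn t P n) / z
      + complex_of_real ((1 - (-1) ^ n) * t) / z ^ 3"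
    unfolding M0 M1 M2 M3 using hn_neq_0[OF t P, of m] z
    by (cases "odd n") (simp_all add: field_simps)
  finally show ?thesis .
qed

theorem mainTheorem1:
  fixes t :: real and P :: "nat \<Rightarrow> real poly" and n :: nat and z :: complex
  assumes "t > 0" and "monic_orth t P" and "z \<noteq> 0"
  shows "An t P n z = 2 + complex_of_real (Rn t P n) / z\<^sup>2
     \<and> Bn t P n z = complex_of_real (rn t P n) / z
          + complex_of_real ((1 - (-1) ^ n) * t) / z ^ 3"
  using An_closed_form[OF assms] Bn_closed_form[OF assms] by blast

end
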